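(* Let $n_1,n_2,n^*_1,n^*_2$ be integers with $1\le n_1\le n^*_1\le n^*_2\le n_2$, $n=n_1+n_2$, $n^*=n^*_1+n^*_2$. Let $\psi_1$ be an Archimedean generator with $\phi_1=\psi_1^{-1}$ and $0<\lambda_1\le\lambda_2$. Let $X_{1:n}(n_1,n_2)$ be the minimum of $n$ dependent nonnegative random variables sharing an Archimedean survival copula with generator $\psi_1$, $n_1$ of which have distribution function $x\mapsto F_1(\lambda_1x)$ and $n_2$ of which have distribution function $x\mapsto F_2(\lambda_2x)$; let $X_{1:n^*}(n^*_1,n^*_2)$ be defined analogously with $n^*_1,n^*_2$ in place of $n_1,n_2$ (same $\psi_1$, $F_1,F_2$, $\lambda_1,\lambda_2$). Suppose $F_1(x)\le F_2(x)$ for all $x$. Then $$(n_1,n_2)\succeq_w(n^*_1,n^*_2)\ \Longrightarrow\ X_{1:n}(n_1,n_2)\le_{st}X_{1:n^*}(n^*_1,n^*_2).$$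
   Context: Archimedean generator: a continuous nonincreasing $\psi:[0,\infty)\to[0,1]$ with $\psi(0)=1$, $\psi(\infty)=0$, which is $m$-monotone; $\phi=\psi^{-1}$. $Z_1,\dots,Z_m$ with marginal survival functions $\bar G_i=1-G_i$ share an Archimedean survival copula with generator $\psi$ if $P(Z_1>z_1,\dots,Z_m>z_m)=\psi(\sum_i\phi(\bar G_i(z_i)))$. $F_1,F_2$ are distribution functions of nonnegative random variables. For $\boldsymbol a,\boldsymbol b\in\mathbb R^k$ with increasingly ordered coordinates $a_{(1)}\le\dots\le a_{(k)}$: $\boldsymbol a\succeq_w\boldsymbol b$ means $\sum_{i=l}^ka_{(i)}\ge\sum_{i=l}^kb_{(i)}$ for all $l$. $U\le_{st}V$ means $P(U>x)\le P(V>x)$ for all $x$. *)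

theory Defs
  imports "HOL-Probability.Probability"
begin

definition m_monotone :: "nat \<Rightarrow> (real \<Rightarrow> real) \<Rightarrow> bool" where
  "m_monotone m \<psi> \<longleftrightarrow> 2 \<le> m \<and>
     (\<forall>k < m - 2. \<forall>x > 0. (deriv ^^ k) \<psi> differentiable (at x)) \<and>
     (\<forall>k \<le> m - 2. \<forall>x > 0. 0 \<le> (-1) ^ k * (deriv ^^ k) \<psi> x) \<and>
     (\<forall>x y. 0 < x \<longrightarrow> x \<le> y \<longrightarrow>
        (-1) ^ (m - 2) * (deriv ^^ (m - 2)) \<psi> y \<le> (-1) ^ (m - 2) * (deriv ^^ (m - 2)) \<psi> x) \<and>
     convex_on {0<..} (\<lambda>x. (-1) ^ (m - 2) * (deriv ^^ (m - 2)) \<psi> x)"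

definition archimedean_generator :: "nat \<Rightarrow> (real \<Rightarrow> real) \<Rightarrow> bool" where
  "archimedean_generator m \<psi> \<longleftrightarrow>
     continuous_on {0..} \<psi> \<and>
     (\<forall>x y. 0 \<le> x \<longrightarrow> x \<le> y \<longrightarrow> \<psi> y \<le> \<psi> x) \<and>
     (\<forall>x \<ge> 0. 0 \<le> \<psi> x \<and> \<psi> x \<le> 1) \<and>
     \<psi> 0 = 1 \<and> (\<psi> \<longlongrightarrow> 0) at_top \<and>
     m_monotone m \<psi>"

text \<open>phi = psi^{-1} (generalised inverse, with phi 0 = inf of zeros of psi, possibly infinity)\<close>
definition gen_inv :: "(real \<Rightarrow> real) \<Rightarrow> real \<Rightarrow> ereal" where
  "gen_inv \<psi> t = Inf {ereal x | x. 0 \<le> x \<and> \<psi> x \<le> t}"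

definition gen_ext :: "(real \<Rightarrow> real) \<Rightarrow> ereal \<Rightarrow> real" where
  "gen_ext \<psi> s = (if s = \<infinity> then 0 else \<psi> (real_of_ereal s))"

definition arch_survival_copula ::
    "'a measure \<Rightarrow> nat \<Rightarrow> (nat \<Rightarrow> 'a \<Rightarrow> real) \<Rightarrow> (real \<Rightarrow> real) \<Rightarrow> bool" where
  "arch_survival_copula M m Z \<psi> \<longleftrightarrow>
     (\<forall>i < m. Z i \<in> borel_measurable M) \<and>
     (\<forall>z :: nat \<Rightarrow> real.
        measure M {\<omega> \<in> space M. \<forall>i < m. Z i \<omega> > z i} =
        gen_ext \<psi> (\<Sum>i < m. gen_inv \<psi> (1 - measure M {\<omega> \<in> space M. Z i \<omega> \<le> z i})))"

definition nonneg_distribution_function :: "(real \<Rightarrow> real) \<Rightarrow> bool" where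
  "nonneg_distribution_function F \<longleftrightarrow> mono F \<and> (\<forall>x. continuous (at_right x) F) \<and>
     (F \<longlongrightarrow> 1) at_top \<and> (\<forall>x < 0. F x = 0)"

definition weak_supmaj :: "real list \<Rightarrow> real list \<Rightarrow> bool" where
  "weak_supmaj a b \<longleftrightarrow> length a = length b \<and>
     (\<forall>l < length a. sum_list (drop l (sort b)) \<le> sum_list (drop l (sort a)))"

definition stoch_le :: "'a measure \<Rightarrow> ('a \<Rightarrow> real) \<Rightarrow> 'b measure \<Rightarrow> ('b \<Rightarrow> real) \<Rightarrow> bool" where
  "stoch_le M U N V \<longleftrightarrow>
     (\<forall>x. measure M {\<omega> \<in> space M. U \<omega> > x} \<le> measure N {\<omega> \<in> space N. V \<omega> > x})"

end

theory Submission
  imports Defs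
begin

text \<open>The minimum exceeds \<open>x\<close> iff every component does, so its survival function is
  \<open>\<psi>(n\<^sub>1 a + n\<^sub>2 b)\<close> with \<open>a = \<phi>(1 - F\<^sub>1(\<lambda>\<^sub>1x)) \<le> b = \<phi>(1 - F\<^sub>2(\<lambda>\<^sub>2x))\<close>.
  Since \<open>n\<^sub>1 \<le> n\<^sup>*\<^sub>1\<close>, the second sample has at least as many \<open>a\<close>-terms, and weak
  supermajorization gives \<open>n\<^sup>* \<le> n\<close>; hence \<open>n\<^sup>*\<^sub>1 a + n\<^sup>*\<^sub>2 b \<le> n\<^sub>1 a + n\<^sub>2 b\<close>, and \<open>\<psi>\<close> is
  nonincreasing.\<close>

lemma gen_inv_nonneg: "0 \<le> gen_inv \<psi> t"
  unfolding gen_inv_def by (rule Inf_greatest) auto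

lemma gen_inv_antimono: "t \<le> t' \<Longrightarrow> gen_inv \<psi> t' \<le> gen_inv \<psi> t"
  unfolding gen_inv_def by (rule Inf_superset_mono) auto

lemma gen_ext_antimono:
  assumes antimono: "\<forall>x y. 0 \<le> x \<longrightarrow> x \<le> y \<longrightarrow> \<psi> y \<le> \<psi> x"
    and nonneg: "\<forall>x \<ge> 0. 0 \<le> \<psi> x"
    and "0 \<le> s" "s \<le> t"
  shows "gen_ext \<psi> t \<le> gen_ext \<psi> s"
proof (cases "t = \<infinity>")
  case True
  then show ?thesis using \<open>0 \<le> s\<close> nonneg
    by (cases s) (auto simp: gen_ext_def)
next
  case False
  with assms(3,4) show ?thesis using antimono
    by (cases s; cases t) (auto simp: gen_ext_def)
qed

lemma arch_survival_copula_Min_survival: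
  assumes "arch_survival_copula M m Z \<psi>" "0 < m"
  shows "measure M {\<omega> \<in> space M. Min ((\<lambda>i. Z i \<omega>) ` {..<m}) > x}
    = gen_ext \<psi> (\<Sum>i<m. gen_inv \<psi> (1 - measure M {\<omega> \<in> space M. Z i \<omega> \<le> x}))"
proof -
  have "{\<omega> \<in> space M. Min ((\<lambda>i. Z i \<omega>) ` {..<m}) > x} = {\<omega> \<in> space M. \<forall>i<m. Z i \<omega> > x}"
    using \<open>0 < m\<close> by (subst Min_gr_iff) auto
  then show ?thesis
    using assms(1)[unfolded arch_survival_copula_def, THEN conjunct2, THEN spec, of "\<lambda>_. x"]
    by simp
qed

lemma arch_survival_copula_two_groups_Min_survival:
  assumes "arch_survival_copula M m Z \<psi>" "0 < m"
    and "\<forall>i < k. \<forall>x. measure M {\<omega> \<in> space M. Z i \<omega> \<le> x} = G1 x"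
    and "\<forall>i. k \<le> i \<and> i < m \<longrightarrow> (\<forall>x. measure M {\<omega> \<in> space M. Z i \<omega> \<le> x} = G2 x)"
  shows "measure M {\<omega> \<in> space M. Min ((\<lambda>i. Z i \<omega>) ` {..<m}) > x}
    = gen_ext \<psi> (\<Sum>i<m. if i < k then gen_inv \<psi> (1 - G1 x) else gen_inv \<psi> (1 - G2 x))"
proof -
  have "(\<Sum>i<m. gen_inv \<psi> (1 - measure M {\<omega> \<in> space M. Z i \<omega> \<le> x}))
      = (\<Sum>i<m. if i < k then gen_inv \<psi> (1 - G1 x) else gen_inv \<psi> (1 - G2 x))"
    using assms(3,4) by (intro sum.cong) auto
  then show ?thesis
    using arch_survival_copula_Min_survival[OF assms(1,2)] by simp
qed

lemma weak_supmaj_sum_list_le: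
  assumes "weak_supmaj a b"
  shows "sum_list b \<le> sum_list a"
proof (cases "a = []")
  case True
  with assms show ?thesis by (simp add: weak_supmaj_def)
next
  case False
  with assms have "sum_list (sort b) \<le> sum_list (sort a)"
    unfolding weak_supmaj_def by (metis drop_0 length_greater_0_conv)
  then show ?thesis by (metis mset_sort sum_mset_sum_list)
qed

lemma scaled_distribution_le:
  assumes "nonneg_distribution_function F1" "nonneg_distribution_function F2"
    and "\<forall>x. F1 x \<le> F2 x" "0 < lam1" "lam1 \<le> lam2"
  shows "F1 (lam1 * x) \<le> F2 (lam2 * x)"
proof (cases "x < 0")
  case True
  then have "lam1 * x < 0" "lam2 * x < 0"
    using assms(4,5) by (simp_all add: mult_pos_neg)
  then show ?thesis
    using assms(1,2) unfolding nonneg_distribution_function_def by simp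
next
  case False
  then have "F2 (lam1 * x) \<le> F2 (lam2 * x)"
    using assms(2,5) unfolding nonneg_distribution_function_def
    by (simp add: monoD mult_right_mono)
  then show ?thesis using assms(3) by (meson order_trans)
qed

lemma sum_lessThan_if_less_mono:
  fixes a b :: "'a :: ordered_comm_monoid_add" and k k' m m' :: nat
  assumes "0 \<le> a" "a \<le> b" "k \<le> k'" "m' \<le> m"
  shows "(\<Sum>i<m'. if i < k' then a else b) \<le> (\<Sum>i<m. if i < k then a else b)"
proof -
  have "(\<Sum>i<m'. if i < k' then a else b) \<le> (\<Sum>i<m'. if i < k then a else b)"
    using assms(2,3) by (intro sum_mono) (auto dest: order.strict_trans2)
  also have "\<dots> \<le> (\<Sum>i<m. if i < k then a else b)"
    using assms by (intro sum_mono2) auto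
  finally show ?thesis .
qed

theorem theorem3p9:
  fixes n1 n2 m1 m2 :: nat
    and \<psi> F1 F2 :: "real \<Rightarrow> real"
    and lam1 lam2 :: real
    and M :: "'a measure" and X :: "nat \<Rightarrow> 'a \<Rightarrow> real"
    and N :: "'b measure" and Y :: "nat \<Rightarrow> 'b \<Rightarrow> real"
  assumes "1 \<le> n1" "n1 \<le> m1" "m1 \<le> m2" "m2 \<le> n2"
    and "archimedean_generator (n1 + n2) \<psi>" "archimedean_generator (m1 + m2) \<psi>"
    and "0 < lam1" "lam1 \<le> lam2"
    and "nonneg_distribution_function F1" "nonneg_distribution_function F2"
    and "\<forall>x. F1 x \<le> F2 x"
    and "prob_space M" "arch_survival_copula M (n1 + n2) X \<psi>"
    and "\<forall>i < n1. \<forall>x. measure M {\<omega> \<in> space M. X i \<omega> \<le> x} = F1 (lam1 * x)"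
    and "\<forall>i. n1 \<le> i \<and> i < n1 + n2 \<longrightarrow> (\<forall>x. measure M {\<omega> \<in> space M. X i \<omega> \<le> x} = F2 (lam2 * x))"
    and "prob_space N" "arch_survival_copula N (m1 + m2) Y \<psi>"
    and "\<forall>i < m1. \<forall>x. measure N {\<omega> \<in> space N. Y i \<omega> \<le> x} = F1 (lam1 * x)"
    and "\<forall>i. m1 \<le> i \<and> i < m1 + m2 \<longrightarrow> (\<forall>x. measure N {\<omega> \<in> space N. Y i \<omega> \<le> x} = F2 (lam2 * x))"
  shows "weak_supmaj [real n1, real n2] [real m1, real m2] \<longrightarrow>
    stoch_le M (\<lambda>\<omega>. Min ((\<lambda>i. X i \<omega>) ` {..<n1 + n2}))
             N (\<lambda>\<omega>. Min ((\<lambda>i. Y i \<omega>) ` {..<m1 + m2}))"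
proof (intro impI, unfold stoch_le_def, intro allI)
  fix x :: real
  assume "weak_supmaj [real n1, real n2] [real m1, real m2]"
  from weak_supmaj_sum_list_le[OF this] have size_le: "m1 + m2 \<le> n1 + n2"
    by (simp flip: of_nat_add)
  let ?a = "gen_inv \<psi> (1 - F1 (lam1 * x))" and ?b = "gen_inv \<psi> (1 - F2 (lam2 * x))"
  have "?a \<le> ?b"
    using scaled_distribution_le[OF assms(9-11,7,8)] by (intro gen_inv_antimono) simp
  then have "(\<Sum>i<m1 + m2. if i < m1 then ?a else ?b) \<le> (\<Sum>i<n1 + n2. if i < n1 then ?a else ?b)"
    using assms(2) size_le by (rule sum_lessThan_if_less_mono[OF gen_inv_nonneg])
  moreover have "0 \<le> (\<Sum>i<m1 + m2. if i < m1 then ?a else ?b)"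
    by (intro sum_nonneg) (simp add: gen_inv_nonneg)
  moreover have "\<forall>x y. 0 \<le> x \<longrightarrow> x \<le> y \<longrightarrow> \<psi> y \<le> \<psi> x" "\<forall>x \<ge> 0. 0 \<le> \<psi> x"
    using assms(5) by (simp_all add: archimedean_generator_def)
  moreover have "0 < n1 + n2" "0 < m1 + m2"
    using assms(1,2) by simp_all
  ultimately show "measure M {\<omega> \<in> space M. Min ((\<lambda>i. X i \<omega>) ` {..<n1 + n2}) > x}
      \<le> measure N {\<omega> \<in> space N. Min ((\<lambda>i. Y i \<omega>) ` {..<m1 + m2}) > x}"
    using arch_survival_copula_two_groups_Min_survival[OF assms(13) _ assms(14,15)]
      arch_survival_copula_two_groups_Min_survival[OF assms(17) _ assms(18,19)]
    by (simp add: gen_ext_antimono)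
qed

end
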